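(* Let $A,B\in\mathbb{Z}$ with $-1\leq A\leq B$, $B\geq 2$ and $2A<B+3$. Let $\mathcal{S}$ be the neighbor set of $T$, $\mathcal{S}^{\ell}$ the neighbor set of $T^{\ell}$, and $\mathcal{S}'=\mathcal{S}^{\ell}\cup\{c\}\cup\mathcal{S}^{\ell}c$ with $\mathcal{S}^{\ell}c=\{s\circ c:s\in\mathcal{S}^{\ell}\}$. Then: (1) if $A>0$, $\mathcal{S}\subset\mathcal{S}'\setminus\{a^Ab,\ a^{-A}b^{-1},\ a^{-A}b^{-1}c\}$; (2) if $A=-1$, $\mathcal{S}\subset\mathcal{S}'\setminus\{a^{-1}b,\ b,\ ab^{-1},\ b^{-1},\ ab^{-1}c,\ b^{-1}c\}$; (3) if $A=0$, $\mathcal{S}\subset\mathcal{S}'\setminus\{ab,\ a^{-1}b^{-1},\ ab^{-1},\ a^{-1}b,\ b,\ b^{-1},\ a^{-1}b^{-1}c,\ ab^{-1}c,\ b^{-1}c\}$. In particular, $\mathcal{S}$ has at least $6$ and at most $10$ elements.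
   Context: Let $a(x,y)=(x+1,y)$, $b(x,y)=(x,y+1)$, $c(x,y)=(-x,-y)$ and let $\Gamma=\{a^pb^qc^r: p,q\in\mathbb{Z},\ r\in\{0,1\}\}$ (products are compositions). Let $M=\begin{pmatrix}0&-B\\1&-A\end{pmatrix}$, $g(\mathbf{x})=M\mathbf{x}+\left(\frac{B-1}{2},0\right)^T$, $\mathcal{D}=\{id,a,\dots,a^{B-2},c\}$ if $B\geq3$ and $\mathcal{D}=\{id,c\}$ if $B=2$, and let $T$ be the unique nonempty compact set with $g(T)=\bigcup_{\delta\in\mathcal{D}}\delta(T)$. Let $T^{\ell}$ be the unique nonempty compact set with $MT^{\ell}=\bigcup_{k=0}^{B-1}\left(T^{\ell}+(k,0)^T\right)$. The neighbor set of $T$ is $\mathcal{S}=\{\gamma\in\Gamma\setminus\{id\}: T\cap\gamma(T)\neq\emptyset\}$; the neighbor set of $T^{\ell}$ is $\mathcal{S}^{\ell}=\{a^pb^q\neq id: T^{\ell}\cap a^pb^q(T^{\ell})\neq\emptyset\}$. *)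

theory Defs
  imports "HOL-Analysis.Analysis"
begin

text \<open>Elements of Gamma: a^p b^q c^r is encoded by the triple (p, q, r) with r :: bool
  (r = True meaning c^1).\<close>

type_synonym gam = "int \<times> int \<times> bool"

definition gmap :: "gam \<Rightarrow> real \<times> real \<Rightarrow> real \<times> real" where
  "gmap \<gamma> v = (case \<gamma> of (p, q, r) \<Rightarrow>
     (if r then - v else v) + (of_int p, of_int q))"

definition gid :: gam where "gid = (0, 0, False)"
definition gc :: gam where "gc = (0, 0, True)"

definition Mmap :: "int \<Rightarrow> int \<Rightarrow> real \<times> real \<Rightarrow> real \<times> real" where
  "Mmap A B v = (0 * fst v - of_int B * snd v, 1 * fst v - of_int A * snd v)"

definition gfun :: "int \<Rightarrow> int \<Rightarrow> real \<times> real \<Rightarrow> real \<times> real" where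
  "gfun A B v = Mmap A B v + ((of_int B - 1) / 2, 0)"

definition Dset :: "int \<Rightarrow> gam set" where
  "Dset B = (if B \<ge> 3 then {(k, 0, False) | k. 0 \<le> k \<and> k \<le> B - 2} \<union> {gc}
             else {gid, gc})"

definition is_T :: "int \<Rightarrow> int \<Rightarrow> (real \<times> real) set \<Rightarrow> bool" where
  "is_T A B T \<longleftrightarrow> T \<noteq> {} \<and> compact T \<and>
     gfun A B ` T = (\<Union>\<delta>\<in>Dset B. gmap \<delta> ` T)"

definition is_Tl :: "int \<Rightarrow> int \<Rightarrow> (real \<times> real) set \<Rightarrow> bool" where
  "is_Tl A B Tl \<longleftrightarrow> Tl \<noteq> {} \<and> compact Tl \<and>
     Mmap A B ` Tl = (\<Union>k\<in>{0..B-1}. (\<lambda>v. v + (of_int k, 0)) ` Tl)"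

definition nbr :: "(real \<times> real) set \<Rightarrow> gam set" where
  "nbr T = {\<gamma>. \<gamma> \<noteq> gid \<and> T \<inter> gmap \<gamma> ` T \<noteq> {}}"

definition nbr_l :: "(real \<times> real) set \<Rightarrow> gam set" where
  "nbr_l T = {(p, q, False) | p q. (p, q, False) \<noteq> gid \<and>
                T \<inter> gmap (p, q, False) ` T \<noteq> {}}"

definition comp_c :: "gam \<Rightarrow> gam" where
  "comp_c \<gamma> = (case \<gamma> of (p, q, r) \<Rightarrow> (p, q, \<not> r))"

definition Sprime :: "(real \<times> real) set \<Rightarrow> gam set" where
  "Sprime Tl = nbr_l Tl \<union> {gc} \<union> comp_c ` nbr_l Tl"

end

theory Submission
  imports Defs
begin

text \<open>
  Write \<open>\<phi>(\<gamma>) = g \<gamma> g\<^sup>-\<^sup>1\<close>. If \<open>T \<inter> \<gamma>(T) \<noteq> {}\<close>, applying \<open>g\<close> and splitting \<open>g(T)\<close> into its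
  digit pieces shows that \<open>T \<inter> \<delta>\<^sup>-\<^sup>1\<phi>(\<gamma>)\<delta>'(T) \<noteq> {}\<close> for some digits \<open>\<delta>, \<delta>'\<close>. Consequently the
  translation parts of all neighbours lie in the set of integer vectors \<open>v\<close> with
  \<open>(T \<union> -T) \<inter> (T \<union> -T + v) \<noteq> {}\<close>. This set is finite, and each of its elements \<open>v\<close> has a
  successor \<open>M v + (k' - k, 0)\<close> in it; along such a chain the second coordinates obey a
  recurrence dominated by \<open>B y\<close>, which confines the set to an explicit small one. The digit
  conditions then exclude the listed elements.

  Conversely, every element of a finite set of group elements (or translations) that is closed
  under these successor maps is a neighbour: in a quadratic norm expanded by \<open>M\<close>, the minimal
  distance between the pieces attached to an element is at most \<open>\<rho> < 1\<close> times that of its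
  successor, so all these distances vanish. Explicit closed sets give six neighbours of \<open>T\<close>
  and show that the translation candidates are neighbours of \<open>T\<^sup>\<ell>\<close>.
\<close>

section \<open>Conjugation by \<open>g\<close>\<close>

definition gam_mult :: "gam \<Rightarrow> gam \<Rightarrow> gam" where
  "gam_mult g h = (case g of (p1, q1, r1) \<Rightarrow> case h of (p2, q2, r2) \<Rightarrow>
     ((if r1 then - p2 else p2) + p1, (if r1 then - q2 else q2) + q1, r1 \<noteq> r2))"

definition gam_inv :: "gam \<Rightarrow> gam" where
  "gam_inv g = (case g of (p, q, r) \<Rightarrow> (if r then p else - p, if r then q else - q, r))"

text \<open>The automorphism \<open>\<gamma> \<mapsto> g \<circ> \<gamma> \<circ> g\<^sup>-\<^sup>1\<close> of \<open>\<Gamma>\<close>.\<close>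
definition twist :: "int \<Rightarrow> int \<Rightarrow> gam \<Rightarrow> gam" where
  "twist A B g = (case g of (p, q, r) \<Rightarrow> (- B * q + (if r then B - 1 else 0), p - A * q, r))"

definition nbr_succ :: "int \<Rightarrow> int \<Rightarrow> gam \<Rightarrow> gam \<Rightarrow> gam \<Rightarrow> gam" where
  "nbr_succ A B g d d' = gam_mult (gam_mult (gam_inv d) (twist A B g)) d'"

lemma gmap_mult: "gmap (gam_mult g h) v = gmap g (gmap h v)"
  by (cases g; cases h; cases v) (auto simp: gmap_def gam_mult_def)

lemma gfun_gmap: "gfun A B (gmap g x) = gmap (twist A B g) (gfun A B x)"
  by (cases g; cases x) (auto simp: gmap_def gfun_def twist_def Mmap_def algebra_simps)

lemma gfun_gmap_nbr_succ:
  assumes "gfun A B x = gmap d' y"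
  shows "gfun A B (gmap g x) = gmap d (gmap (nbr_succ A B g d d') y)"
proof -
  have "gmap d (gmap (nbr_succ A B g d d') y) = gmap d (gmap (gam_inv d) (gmap (twist A B g) (gmap d' y)))"
    by (simp add: nbr_succ_def gmap_mult)
  also have "\<dots> = gmap (twist A B g) (gmap d' y)"
    by (cases d; cases y) (auto simp: gmap_def gam_inv_def zero_prod_def)
  finally show ?thesis using assms gfun_gmap by simp
qed

lemma Mmap_diff: "Mmap A B (v - w) = Mmap A B v - Mmap A B w"
  by (simp add: Mmap_def algebra_simps)

lemma gfun_diff: "gfun A B v - gfun A B w = Mmap A B (v - w)"
  by (simp add: gfun_def Mmap_diff)

lemma gmap_diff: "gmap g v - gmap g w = (if snd (snd g) then - (v - w) else v - w)"
  by (cases g) (auto simp: gmap_def)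

lemma gmap_inj: "gmap g v = gmap g w \<Longrightarrow> v = w"
  using gmap_diff[of g v w] by (auto split: if_splits)

lemma continuous_on_gmap: "continuous_on UNIV (gmap g)"
proof -
  obtain p q r where "g = (p, q, r)" by (cases g)
  then show ?thesis unfolding gmap_def by (cases r) (simp_all add: continuous_intros)
qed

section \<open>Quadratic forms expanded by \<open>M\<close>\<close>

definition diag_form :: "int \<Rightarrow> real \<times> real \<Rightarrow> real" where
  "diag_form B w = (fst w)\<^sup>2 + of_int B * (snd w)\<^sup>2"

definition norm_form :: "int \<Rightarrow> int \<Rightarrow> real \<times> real \<Rightarrow> real" where
  "norm_form A B w = (fst w)\<^sup>2 - of_int A * fst w * snd w + of_int B * (snd w)\<^sup>2"

lemma diag_form_pos_def:
  assumes "0 < B"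
  shows "0 \<le> diag_form B w" and "diag_form B w = 0 \<Longrightarrow> w = 0"
proof -
  show "0 \<le> diag_form B w" using assms by (simp add: diag_form_def)
  assume "diag_form B w = 0"
  moreover have "0 \<le> of_int B * (snd w)\<^sup>2" using assms by simp
  ultimately have "(fst w)\<^sup>2 = 0" "of_int B * (snd w)\<^sup>2 = 0"
    unfolding diag_form_def by (smt (verit) zero_le_power2)+
  then show "w = 0" using assms by (simp add: prod_eq_iff)
qed

text \<open>With \<open>N = diag_form B\<close>, multiplying out gives \<open>(B - 1) N(Mw) - B N(w) = B G\<close>, and
  \<open>(B - 2) G\<close> is a sum of two squares with nonnegative coefficients once \<open>A\<^sup>2 \<le> (B - 2)\<^sup>2\<close>.\<close>
lemma diag_form_Mmap:
  assumes "\<bar>A\<bar> \<le> B - 2"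
  shows "diag_form B w \<le> (of_int B - 1) / of_int B * diag_form B (Mmap A B w)"
proof -
  obtain x y where w: "w = (x, y)" by (cases w)
  define b :: real where "b = of_int B"
  define a :: real where "a = of_int A"
  define u where "u = x - a * y"
  have b2: "b \<ge> 2" using assms by (simp add: b_def)
  have "\<bar>A\<bar> \<le> \<bar>B - 2\<bar>" using assms by simp
  then have "A\<^sup>2 \<le> (B - 2)\<^sup>2" by (simp only: abs_le_square_iff)
  then have "real_of_int (A\<^sup>2) \<le> real_of_int ((B - 2)\<^sup>2)" by (simp only: of_int_le_iff)
  then have a2: "a\<^sup>2 \<le> (b - 2)\<^sup>2" by (simp add: a_def b_def)
  define G where "G = (b - 2) * u\<^sup>2 - 2 * a * u * y + (b * (b - 2) - a\<^sup>2) * y\<^sup>2"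
  have G: "G \<ge> 0"
  proof (cases "b = 2")
    case True
    then have "a = 0" using a2 by simp
    then show ?thesis using True by (simp add: G_def)
  next
    case False
    have "(b - 1) * a\<^sup>2 \<le> (b - 1) * (b - 2)\<^sup>2" using a2 b2 by (intro mult_left_mono) auto
    also have "\<dots> \<le> b * (b - 2)\<^sup>2" by (intro mult_right_mono) auto
    finally have c: "b * (b - 2)\<^sup>2 - (b - 1) * a\<^sup>2 \<ge> 0" by simp
    have "(b - 2) * G = ((b - 2) * u - a * y)\<^sup>2 + (b * (b - 2)\<^sup>2 - (b - 1) * a\<^sup>2) * y\<^sup>2"
      unfolding G_def by (simp add: power2_eq_square algebra_simps)
    also have "\<dots> \<ge> 0" using c by auto
    finally show ?thesis using False b2 by (simp add: zero_le_mult_iff)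
  qed
  have "(b - 1) * diag_form B (Mmap A B w) - b * diag_form B w = b * G"
    by (simp add: w diag_form_def Mmap_def u_def a_def b_def G_def power2_eq_square algebra_simps)
  also have "\<dots> \<ge> 0" using G b2 by simp
  finally show ?thesis using b2 by (simp add: b_def field_simps)
qed

lemma norm_form_pos_def:
  assumes "A\<^sup>2 < 4 * B"
  shows "0 \<le> norm_form A B w" and "norm_form A B w = 0 \<Longrightarrow> w = 0"
proof -
  have d: "(0::real) < 4 * of_int B - of_int (A\<^sup>2)" using assms by linarith
  have e: "4 * norm_form A B w = (2 * fst w - of_int A * snd w)\<^sup>2 + (4 * of_int B - of_int (A\<^sup>2)) * (snd w)\<^sup>2"
    by (simp add: norm_form_def power2_eq_square algebra_simps)
  have c: "0 \<le> (4 * of_int B - of_int (A\<^sup>2)) * (snd w)\<^sup>2" using d by simp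
  then show "0 \<le> norm_form A B w" using e by (smt (verit) zero_le_power2)
  assume "norm_form A B w = 0"
  then have "(2 * fst w - of_int A * snd w)\<^sup>2 = 0" "(4 * of_int B - of_int (A\<^sup>2)) * (snd w)\<^sup>2 = 0"
    using e c by (smt (verit) zero_le_power2)+
  then show "w = 0" using d by (simp add: prod_eq_iff)
qed

lemma norm_form_Mmap: "norm_form A B (Mmap A B w) = of_int B * norm_form A B w"
  by (simp add: norm_form_def Mmap_def power2_eq_square algebra_simps)

locale tile_params =
  fixes A B :: int
  assumes A_lower: "-1 \<le> A" and A_le_B: "A \<le> B" and B_ge_2: "2 \<le> B" and A_upper: "2 * A < B + 3"
begin

text \<open>Outside the range of \<open>diag_form\<close> the characteristic polynomial of \<open>M\<close> has no real roots.\<close>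
lemma small_A_or_complex_roots: "\<bar>A\<bar> \<le> B - 2 \<or> A\<^sup>2 < 4 * B"
proof (cases "\<bar>A\<bar> \<le> B - 2")
  case False
  then have "B \<le> 4" "A \<le> 3" using A_lower A_le_B A_upper by auto
  then have "A \<in> {-1, 0, 1, 2, 3}" "B \<in> {2, 3, 4}" using A_lower A_le_B B_ge_2 by auto
  then show ?thesis using A_le_B by auto
qed simp

lemma expanding_form:
  obtains N :: "real \<times> real \<Rightarrow> real" and \<rho> :: real
  where "0 \<le> \<rho>" "\<rho> < 1" "continuous_on UNIV N" "\<And>w. 0 \<le> N w" "\<And>w. N w = 0 \<Longrightarrow> w = 0"
    "\<And>w. N (- w) = N w" "\<And>w. N w \<le> \<rho> * N (Mmap A B w)"
proof -
  have B: "(2::real) \<le> of_int B" using B_ge_2 by simp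
  consider "\<bar>A\<bar> \<le> B - 2" | "A\<^sup>2 < 4 * B" using small_A_or_complex_roots by blast
  then show ?thesis
  proof cases
    case 1
    show ?thesis
    proof (rule that[of "(of_int B - 1) / of_int B" "diag_form B"])
      show "continuous_on UNIV (diag_form B)" unfolding diag_form_def by (intro continuous_intros)
      show "diag_form B (- w) = diag_form B w" for w by (simp add: diag_form_def)
      show "(of_int B - 1) / of_int B < (1::real)" "0 \<le> (of_int B - 1) / (of_int B :: real)"
        using B by simp_all
    qed (use B_ge_2 diag_form_pos_def[of B] diag_form_Mmap[OF 1] in simp_all)
  next
    case 2
    show ?thesis
    proof (rule that[of "1 / of_int B" "norm_form A B"])
      show "continuous_on UNIV (norm_form A B)" unfolding norm_form_def by (intro continuous_intros)
      show "norm_form A B (- w) = norm_form A B w" for w by (simp add: norm_form_def)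
      show "norm_form A B w \<le> 1 / of_int B * norm_form A B (Mmap A B w)" for w
        using B by (simp add: norm_form_Mmap)
      show "1 / of_int B < (1::real)" "0 \<le> 1 / (of_int B :: real)" using B by simp_all
    qed (use norm_form_pos_def[OF 2] in simp_all)
  qed
qed

end

section \<open>Touching pieces and their successors\<close>

lemma finite_contraction_zero:
  fixes d :: "'a \<Rightarrow> real"
  assumes "finite S" and "\<And>s. s \<in> S \<Longrightarrow> 0 \<le> d s"
    and "\<And>s. s \<in> S \<Longrightarrow> \<exists>s'\<in>S. d s \<le> \<rho> * d s'" and "0 \<le> \<rho>" "\<rho> < 1" and "s \<in> S"
  shows "d s = 0"
proof -
  define D where "D = Max (d ` S)"
  have le_D: "d t \<le> D" if "t \<in> S" for t using assms(1) that unfolding D_def by simp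
  have "D \<in> d ` S" unfolding D_def using assms(1,6) by (intro Max_in) auto
  then obtain s0 where s0: "s0 \<in> S" "D = d s0" by blast
  obtain s' where s': "s' \<in> S" "d s0 \<le> \<rho> * d s'" using assms(3)[OF s0(1)] by blast
  have "\<rho> * d s' \<le> \<rho> * D" using le_D[OF s'(1)] assms(4) by (rule mult_left_mono)
  then have "D \<le> \<rho> * D" using s' s0 by simp
  then have "D \<le> 0" using assms(5) by (smt (verit) mult_le_cancel_right1)
  then show "d s = 0" using le_D[OF assms(6)] assms(2)[OF assms(6)] by simp
qed

text \<open>The minimal distances \<open>\<delta>\<^sub>i = min {N (x - G\<^sub>i x') | x, x' \<in> K}\<close> satisfy
  \<open>\<delta>\<^sub>i \<le> \<rho> \<delta>\<^sub>j\<close>, so they all vanish.\<close>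
lemma contraction_forces_touching:
  fixes K :: "'a :: real_normed_vector set" and G :: "'i \<Rightarrow> 'a \<Rightarrow> 'a" and N :: "'a \<Rightarrow> real"
  assumes K: "compact K" "K \<noteq> {}" and X: "finite X"
    and N: "continuous_on UNIV N" "\<And>w. 0 \<le> N w" "\<And>w. N w = 0 \<Longrightarrow> w = 0" and "0 \<le> \<rho>" "\<rho> < 1"
    and G: "\<And>i. i \<in> X \<Longrightarrow> continuous_on UNIV (G i)"
    and step: "\<And>i. i \<in> X \<Longrightarrow> \<exists>j\<in>X. \<forall>p\<in>K. \<forall>q\<in>K. \<exists>x\<in>K. \<exists>x'\<in>K.
                  N (x - G i x') \<le> \<rho> * N (p - G j q)"
    and "i \<in> X"
  shows "\<exists>q\<in>K. G i q \<in> K"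
proof -
  define f where "f i = (\<lambda>(x, x'). N (x - G i x'))" for i
  have "\<exists>xx\<in>K \<times> K. \<forall>yy\<in>K \<times> K. f i xx \<le> f i yy" if "i \<in> X" for i
  proof (rule continuous_attains_inf)
    show "compact (K \<times> K)" "K \<times> K \<noteq> {}" using K by (simp_all add: compact_Times)
    have "continuous_on UNIV (\<lambda>xx. fst xx - G i (snd xx))"
      by (intro continuous_intros continuous_on_compose2[OF G[OF that]]) auto
    then show "continuous_on (K \<times> K) (f i)" unfolding f_def case_prod_beta
      by (intro continuous_on_compose2[OF N(1)]) (auto intro: continuous_on_subset)
  qed
  then obtain m where m: "\<And>i. i \<in> X \<Longrightarrow> m i \<in> K \<times> K"
    "\<And>i yy. i \<in> X \<Longrightarrow> yy \<in> K \<times> K \<Longrightarrow> f i (m i) \<le> f i yy"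
    by metis
  have \<delta>0: "f i (m i) = 0" if "i \<in> X" for i
  proof (rule finite_contraction_zero[OF X _ _ \<open>0 \<le> \<rho>\<close> \<open>\<rho> < 1\<close> that])
    show "0 \<le> f i (m i)" for i unfolding f_def using N(2) by (simp add: case_prod_beta)
    fix i assume i: "i \<in> X"
    obtain j where j: "j \<in> X" and st: "\<forall>p\<in>K. \<forall>q\<in>K. \<exists>x\<in>K. \<exists>x'\<in>K.
        N (x - G i x') \<le> \<rho> * N (p - G j q)" using step[OF i] by blast
    obtain p q where pq: "m j = (p, q)" "p \<in> K" "q \<in> K" using m(1)[OF j] by (cases "m j") auto
    then obtain x x' where x: "x \<in> K" "x' \<in> K" "N (x - G i x') \<le> \<rho> * N (p - G j q)"
      using st by blast
    have "f i (m i) \<le> f i (x, x')" using m(2)[OF i] x by auto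
    also have "\<dots> \<le> \<rho> * f j (m j)" using x(3) pq unfolding f_def by simp
    finally show "\<exists>j\<in>X. f i (m i) \<le> \<rho> * f j (m j)" using j by blast
  qed
  obtain p q where pq: "m i = (p, q)" "p \<in> K" "q \<in> K" using m(1)[OF \<open>i \<in> X\<close>] by (cases "m i") auto
  have "N (p - G i q) = 0" using \<delta>0[OF \<open>i \<in> X\<close>] pq unfolding f_def by simp
  then have "p = G i q" using N(3) by fastforce
  then show ?thesis using pq by auto
qed

definition touches :: "(real \<times> real) set \<Rightarrow> gam \<Rightarrow> bool" where
  "touches T g \<longleftrightarrow> T \<inter> gmap g ` T \<noteq> {}"

lemma nbr_iff: "g \<in> nbr T \<longleftrightarrow> g \<noteq> gid \<and> touches T g"
  by (simp add: nbr_def touches_def)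

lemma Dset_cases:
  assumes "d \<in> Dset B" "2 \<le> B"
  obtains "d = gc" | k where "0 \<le> k" "k \<le> B - 2" "d = (k, 0, False)"
  using assms unfolding Dset_def gid_def by (auto split: if_splits) (use order_refl in force)

lemma translation_in_Dset: "2 \<le> B \<Longrightarrow> 0 \<le> k \<Longrightarrow> k \<le> B - 2 \<Longrightarrow> (k, 0, False) \<in> Dset B"
  unfolding Dset_def gid_def by auto

lemma gc_in_Dset: "gc \<in> Dset B"
  unfolding Dset_def by auto

definition nbr_succs :: "int \<Rightarrow> int \<Rightarrow> gam \<Rightarrow> gam set" where
  "nbr_succs A B g = {nbr_succ A B g d d' | d d'. d \<in> Dset B \<and> d' \<in> Dset B}"

lemma nbr_succ_digits:
  assumes "twist A B g = (P, Q, r)"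
  shows "nbr_succ A B g (k, 0, False) (k', 0, False) = (P + (if r then - k' else k') - k, Q, r)"
    and "nbr_succ A B g (k, 0, False) gc = (P - k, Q, \<not> r)"
    and "nbr_succ A B g gc (k', 0, False) = (- P - (if r then - k' else k'), - Q, \<not> r)"
    and "nbr_succ A B g gc gc = (- P, - Q, r)"
  using assms by (simp_all add: nbr_succ_def gam_mult_def gam_inv_def gc_def)

lemma mem_nbr_succs_digits:
  fixes P Q :: int
  assumes "2 \<le> B" and twist: "twist A B g = (P, Q, r)"
  shows "(p, q, s) \<in> nbr_succs A B g \<longleftrightarrow>
    (\<exists>k k'. 0 \<le> k \<and> k \<le> B - 2 \<and> 0 \<le> k' \<and> k' \<le> B - 2 \<and>
        (p, q, s) = (P + (if r then - k' else k') - k, Q, r)) \<or>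
    (\<exists>k. 0 \<le> k \<and> k \<le> B - 2 \<and> (p, q, s) = (P - k, Q, \<not> r)) \<or>
    (\<exists>k'. 0 \<le> k' \<and> k' \<le> B - 2 \<and> (p, q, s) = (- P - (if r then - k' else k'), - Q, \<not> r)) \<or>
    (p, q, s) = (- P, - Q, r)" (is "?lhs \<longleftrightarrow> ?digits")
proof
  assume ?lhs
  then obtain d d' where d: "d \<in> Dset B" "d' \<in> Dset B" and pqs: "(p, q, s) = nbr_succ A B g d d'"
    unfolding nbr_succs_def by blast
  from d(1) assms(1) show ?digits
  proof (cases rule: Dset_cases)
    case 1
    from d(2) assms(1) show ?thesis
      by (cases rule: Dset_cases) (use 1 pqs in \<open>auto simp: nbr_succ_digits[OF twist]\<close>)
  next
    case (2 k)
    from d(2) assms(1) show ?thesis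
      by (cases rule: Dset_cases) (use 2 pqs in \<open>auto simp: nbr_succ_digits[OF twist]\<close>)
  qed
next
  have mem: "nbr_succ A B g d d' \<in> nbr_succs A B g" if "d \<in> Dset B" "d' \<in> Dset B" for d d'
    using that unfolding nbr_succs_def by blast
  note digit = translation_in_Dset[OF assms(1)] gc_in_Dset
  assume ?digits
  then show ?lhs
  proof (elim disjE exE conjE)
    fix k k' assume "0 \<le> k" "k \<le> B - 2" "0 \<le> k'" "k' \<le> B - 2"
      "(p, q, s) = (P + (if r then - k' else k') - k, Q, r)"
    then show ?lhs using mem[of "(k, 0, False)" "(k', 0, False)"] digit
      by (simp add: nbr_succ_digits[OF twist])
  next
    fix k assume "0 \<le> k" "k \<le> B - 2" "(p, q, s) = (P - k, Q, \<not> r)"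
    then show ?lhs using mem[of "(k, 0, False)" gc] digit by (simp add: nbr_succ_digits[OF twist])
  next
    fix k' assume "0 \<le> k'" "k' \<le> B - 2" "(p, q, s) = (- P - (if r then - k' else k'), - Q, \<not> r)"
    then show ?lhs using mem[of gc "(k', 0, False)"] digit by (simp add: nbr_succ_digits[OF twist])
  next
    assume "(p, q, s) = (- P, - Q, r)"
    then show ?lhs using mem[of gc gc] digit by (simp add: nbr_succ_digits[OF twist])
  qed
qed

text \<open>Eliminating the digits turns membership into linear arithmetic, which automation decides
  on explicit sets.\<close>
lemma mem_nbr_succs_iff:
  fixes A B x y p q :: int and r s :: bool
  assumes "2 \<le> B"
  defines "P \<equiv> - B * y + (if r then B - 1 else 0)" and "Q \<equiv> x - A * y"
  shows "(p, q, s) \<in> nbr_succs A B (x, y, r) \<longleftrightarrow>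
     s = r \<and> q = Q \<and> (if r then 0 \<le> P - p \<and> P - p \<le> 2 * (B - 2) else \<bar>p - P\<bar> \<le> B - 2) \<or>
     s \<noteq> r \<and> q = Q \<and> 0 \<le> P - p \<and> P - p \<le> B - 2 \<or>
     s \<noteq> r \<and> q = - Q \<and> 0 \<le> (if r then p + P else - P - p) \<and> (if r then p + P else - P - p) \<le> B - 2 \<or>
     s = r \<and> q = - Q \<and> p = - P"
  (is "?lhs \<longleftrightarrow> ?aa \<or> ?ac \<or> ?ca \<or> ?cc")
proof -
  have aa: "(\<exists>k k'. 0 \<le> k \<and> k \<le> B - 2 \<and> 0 \<le> k' \<and> k' \<le> B - 2 \<and>
      (p, q, s) = (P + (if r then - k' else k') - k, Q, r)) \<longleftrightarrow> ?aa"
  proof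
    assume ?aa
    show "\<exists>k k'. 0 \<le> k \<and> k \<le> B - 2 \<and> 0 \<le> k' \<and> k' \<le> B - 2 \<and>
        (p, q, s) = (P + (if r then - k' else k') - k, Q, r)"
    proof (cases r)
      case True
      then show ?thesis using \<open>?aa\<close>
        by (intro exI[of _ "min (P - p) (B - 2)"] exI[of _ "P - p - min (P - p) (B - 2)"]) auto
    next
      case False
      then show ?thesis using \<open>?aa\<close>
        by (intro exI[of _ "max 0 (P - p)"] exI[of _ "max 0 (p - P)"]) auto
    qed
  qed (auto split: if_splits)
  have ac: "(\<exists>k. 0 \<le> k \<and> k \<le> B - 2 \<and> (p, q, s) = (P - k, Q, \<not> r)) \<longleftrightarrow> ?ac"
    by (rule iffI, force, rule exI[of _ "P - p"], auto)
  have ca: "(\<exists>k'. 0 \<le> k' \<and> k' \<le> B - 2 \<and> (p, q, s) = (- P - (if r then - k' else k'), - Q, \<not> r))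
      \<longleftrightarrow> ?ca"
    by (rule iffI, force, rule exI[of _ "if r then p + P else - P - p"], auto)
  have cc: "(p, q, s) = (- P, - Q, r) \<longleftrightarrow> ?cc" by auto
  have "twist A B (x, y, r) = (P, Q, r)" by (simp add: twist_def P_def Q_def)
  from mem_nbr_succs_digits[OF assms(1) this] show ?thesis by (simp only: aa ac ca cc)
qed

locale tile = tile_params +
  fixes T :: "(real \<times> real) set"
  assumes is_T: "is_T A B T"
begin

lemma compact_T: "compact T" and T_nonempty: "T \<noteq> {}"
  using is_T by (auto simp: is_T_def)

lemma T_lift: "d \<in> Dset B \<Longrightarrow> y \<in> T \<Longrightarrow> \<exists>x\<in>T. gfun A B x = gmap d y"
  using is_T unfolding is_T_def by (metis (no_types, lifting) UN_iff image_eqI imageE)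

lemma T_descend: "x \<in> T \<Longrightarrow> \<exists>d\<in>Dset B. \<exists>y\<in>T. gfun A B x = gmap d y"
  using is_T unfolding is_T_def by (metis (no_types, lifting) UN_iff image_eqI imageE)

lemma touches_succ:
  assumes "touches T g"
  shows "\<exists>h\<in>nbr_succs A B g. touches T h"
proof -
  obtain w where w: "w \<in> T" "gmap g w \<in> T" using assms unfolding touches_def by blast
  obtain d x where d: "d \<in> Dset B" "x \<in> T" "gfun A B (gmap g w) = gmap d x"
    using T_descend[OF w(2)] by blast
  obtain d' y where d': "d' \<in> Dset B" "y \<in> T" "gfun A B w = gmap d' y"
    using T_descend[OF w(1)] by blast
  have "gmap d x = gmap d (gmap (nbr_succ A B g d d') y)"
    using gfun_gmap_nbr_succ[OF d'(3)] d(3) by simp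
  then have "x = gmap (nbr_succ A B g d d') y" by (rule gmap_inj)
  then have "touches T (nbr_succ A B g d d')"
    unfolding touches_def using d(2) d'(2) by (metis IntI empty_iff image_eqI)
  moreover have "nbr_succ A B g d d' \<in> nbr_succs A B g"
    using d(1) d'(1) unfolding nbr_succs_def by blast
  ultimately show ?thesis by blast
qed

lemma touches_if_succ_closed:
  assumes X: "finite X" and closed: "\<And>h. h \<in> X \<Longrightarrow> \<exists>h'\<in>X. h' \<in> nbr_succs A B h" and "g \<in> X"
  shows "touches T g"
proof -
  obtain N :: "real \<times> real \<Rightarrow> real" and \<rho> :: real
    where N: "0 \<le> \<rho>" "\<rho> < 1" "continuous_on UNIV N" "\<And>w. 0 \<le> N w" "\<And>w. N w = 0 \<Longrightarrow> w = 0"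
    "\<And>w. N (- w) = N w" "\<And>w. N w \<le> \<rho> * N (Mmap A B w)"
    using expanding_form by metis
  have "\<exists>q\<in>T. gmap g q \<in> T"
  proof (rule contraction_forces_touching[OF compact_T T_nonempty X N(3-5,1,2) continuous_on_gmap _ \<open>g \<in> X\<close>])
    fix h assume "h \<in> X"
    then obtain d d' where d: "d \<in> Dset B" "d' \<in> Dset B" and succ: "nbr_succ A B h d d' \<in> X"
      using closed unfolding nbr_succs_def by blast
    show "\<exists>j\<in>X. \<forall>p\<in>T. \<forall>q\<in>T. \<exists>x\<in>T. \<exists>x'\<in>T. N (x - gmap h x') \<le> \<rho> * N (p - gmap j q)"
    proof (intro bexI[OF _ succ] ballI)
      fix p q assume "p \<in> T" "q \<in> T"
      obtain x where x: "x \<in> T" "gfun A B x = gmap d p" using T_lift[OF d(1) \<open>p \<in> T\<close>] by blast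
      obtain x' where x': "x' \<in> T" "gfun A B x' = gmap d' q" using T_lift[OF d(2) \<open>q \<in> T\<close>] by blast
      have "Mmap A B (x - gmap h x') = gmap d p - gmap d (gmap (nbr_succ A B h d d') q)"
        using gfun_diff[of A B x "gmap h x'"] x(2) gfun_gmap_nbr_succ[OF x'(2)] by simp
      then have "N (Mmap A B (x - gmap h x')) = N (p - gmap (nbr_succ A B h d d') q)"
        using gmap_diff[of d] N(6)[of "p - gmap (nbr_succ A B h d d') q"] by (simp split: if_splits)
      then show "\<exists>x\<in>T. \<exists>x'\<in>T. N (x - gmap h x') \<le> \<rho> * N (p - gmap (nbr_succ A B h d d') q)"
        using x x' N(7) by metis
    qed
  qed
  then show ?thesis unfolding touches_def by blast
qed

end

definition of_int_pair :: "int \<times> int \<Rightarrow> real \<times> real" where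
  "of_int_pair v = (of_int (fst v), of_int (snd v))"

text \<open>The integer vectors \<open>M v + (k' - k, 0)\<close> with digits \<open>0 \<le> k, k' < B\<close>.\<close>
definition trans_succs :: "int \<Rightarrow> int \<Rightarrow> int \<times> int \<Rightarrow> (int \<times> int) set" where
  "trans_succs A B v = {(j - B * snd v, fst v - A * snd v) | j. \<bar>j\<bar> \<le> B - 1}"

lemma mem_trans_succs_iff: "(t, s) \<in> trans_succs A B (x, y) \<longleftrightarrow> s = x - A * y \<and> \<bar>t + B * y\<bar> \<le> B - 1"
  unfolding trans_succs_def by (auto intro!: exI[of _ "t + B * y"])

lemma digit_difference: "\<bar>j\<bar> \<le> (B::int) - 1 \<Longrightarrow> \<exists>k\<in>{0..B - 1}. \<exists>k'\<in>{0..B - 1}. j = k' - k"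
  by (rule bexI[of _ "max 0 (- j)"], rule bexI[of _ "max 0 j"]) auto

lemma Mmap_of_int_pair:
  "Mmap A B (of_int_pair v) + (of_int j, 0) = of_int_pair (j - B * snd v, fst v - A * snd v)"
  by (simp add: Mmap_def of_int_pair_def)

locale lattice_tile = tile_params +
  fixes Tl :: "(real \<times> real) set"
  assumes is_Tl: "is_Tl A B Tl"
begin

lemma Tl_lift: "k \<in> {0..B - 1} \<Longrightarrow> y \<in> Tl \<Longrightarrow> \<exists>x\<in>Tl. Mmap A B x = y + (of_int k, 0)"
  using is_Tl unfolding is_Tl_def by (metis (no_types, lifting) UN_iff imageE image_eqI)

lemma translate_touches_if_closed:
  assumes X: "finite X" and closed: "\<And>u. u \<in> X \<Longrightarrow> \<exists>u'\<in>X. u' \<in> trans_succs A B u" and "v \<in> X"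
  shows "\<exists>q\<in>Tl. q + of_int_pair v \<in> Tl"
proof -
  obtain N :: "real \<times> real \<Rightarrow> real" and \<rho> :: real
    where N: "0 \<le> \<rho>" "\<rho> < 1" "continuous_on UNIV N" "\<And>w. 0 \<le> N w" "\<And>w. N w = 0 \<Longrightarrow> w = 0"
    "\<And>w. N w \<le> \<rho> * N (Mmap A B w)"
    using expanding_form by metis
  have Tl: "compact Tl" "Tl \<noteq> {}" using is_Tl unfolding is_Tl_def by auto
  show ?thesis
  proof (rule contraction_forces_touching[where G = "\<lambda>u q. q + of_int_pair u", OF Tl X N(3-5,1,2)
        _ _ \<open>v \<in> X\<close>])
    show "continuous_on UNIV (\<lambda>q. q + of_int_pair u)" for u by (intro continuous_intros)
    fix u assume "u \<in> X"
    then obtain j where j: "\<bar>j\<bar> \<le> B - 1" and succ: "(j - B * snd u, fst u - A * snd u) \<in> X"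
      using closed unfolding trans_succs_def by blast
    obtain k k' where k: "k \<in> {0..B - 1}" "k' \<in> {0..B - 1}" "j = k' - k"
      using digit_difference[OF j] by blast
    show "\<exists>j\<in>X. \<forall>p\<in>Tl. \<forall>q\<in>Tl. \<exists>x\<in>Tl. \<exists>x'\<in>Tl.
        N (x - (x' + of_int_pair u)) \<le> \<rho> * N (p - (q + of_int_pair j))"
    proof (intro bexI[OF _ succ] ballI)
      fix p q assume "p \<in> Tl" "q \<in> Tl"
      obtain x where x: "x \<in> Tl" "Mmap A B x = p + (of_int k, 0)" using Tl_lift[OF k(1) \<open>p \<in> Tl\<close>] by blast
      obtain x' where x': "x' \<in> Tl" "Mmap A B x' = q + (of_int k', 0)" using Tl_lift[OF k(2) \<open>q \<in> Tl\<close>] by blast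
      have "Mmap A B (x - (x' + of_int_pair u)) = Mmap A B x - Mmap A B x' - Mmap A B (of_int_pair u)"
        by (simp add: Mmap_def algebra_simps)
      also have "\<dots> = p - (q + (Mmap A B (of_int_pair u) + (of_int j, 0)))"
        using x(2) x'(2) k(3) by (simp add: algebra_simps)
      also have "\<dots> = p - (q + of_int_pair (j - B * snd u, fst u - A * snd u))"
        by (simp only: Mmap_of_int_pair)
      finally have "Mmap A B (x - (x' + of_int_pair u)) = p - (q + of_int_pair (j - B * snd u, fst u - A * snd u))" .
      then show "\<exists>x\<in>Tl. \<exists>x'\<in>Tl. N (x - (x' + of_int_pair u))
          \<le> \<rho> * N (p - (q + of_int_pair (j - B * snd u, fst u - A * snd u)))"
        using x x' N(6) by metis
    qed
  qed
qed

end

section \<open>The difference set of \<open>T\<close>\<close>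

definition symm :: "(real \<times> real) set \<Rightarrow> (real \<times> real) set" where
  "symm T = T \<union> uminus ` T"

text \<open>The integer vectors \<open>v\<close> with \<open>(T \<union> -T) \<inter> (T \<union> -T + v) \<noteq> {}\<close>: they contain the
  translation parts of all neighbours of \<open>T\<close> and are closed under \<open>trans_succs\<close>.\<close>
definition diff_set :: "(real \<times> real) set \<Rightarrow> (int \<times> int) set" where
  "diff_set T = {v. \<exists>p\<in>symm T. p - of_int_pair v \<in> symm T}"

lemma uminus_in_diff_set: "v \<in> diff_set T \<Longrightarrow> - v \<in> diff_set T"
proof -
  assume "v \<in> diff_set T"
  then obtain p where p: "p \<in> symm T" "p - of_int_pair v \<in> symm T" unfolding diff_set_def by blast
  have "(p - of_int_pair v) - of_int_pair (- v) = p" by (simp add: of_int_pair_def)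
  then show "- v \<in> diff_set T" using p unfolding diff_set_def by (metis (mono_tags) mem_Collect_eq)
qed

lemma finite_diff_set:
  assumes "compact T" shows "finite (diff_set T)"
proof -
  have "compact (symm T)" unfolding symm_def using assms
    by (intro compact_Un compact_continuous_image) (auto intro: continuous_intros)
  then obtain R where R: "\<And>p. p \<in> symm T \<Longrightarrow> norm p \<le> R"
    using compact_imp_bounded bounded_iff by metis
  define n where "n = \<lceil>2 * R\<rceil>"
  have "diff_set T \<subseteq> {-n..n} \<times> {-n..n}"
  proof
    fix v assume "v \<in> diff_set T"
    then obtain p where p: "p \<in> symm T" "p - of_int_pair v \<in> symm T" unfolding diff_set_def by blast
    have "norm (of_int_pair v) \<le> norm p + norm (p - of_int_pair v)"
      using norm_triangle_ineq4[of p "p - of_int_pair v"] by simp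
    also have "\<dots> \<le> 2 * R" using R[OF p(1)] R[OF p(2)] by simp
    finally have "\<bar>real_of_int (fst v)\<bar> \<le> 2 * R" "\<bar>real_of_int (snd v)\<bar> \<le> 2 * R"
      unfolding of_int_pair_def using norm_fst_le norm_snd_le
      by (metis real_norm_def order_trans)+
    then have "\<bar>fst v\<bar> \<le> n" "\<bar>snd v\<bar> \<le> n" unfolding n_def by (simp_all add: le_ceiling_iff)
    then show "v \<in> {-n..n} \<times> {-n..n}" by (cases v) auto
  qed
  then show ?thesis by (rule finite_subset) simp
qed

lemma touches_imp_in_diff_set:
  assumes "touches T (p, q, r)" shows "(p, q) \<in> diff_set T"
proof -
  obtain w where w: "w \<in> T" "gmap (p, q, r) w \<in> T" using assms unfolding touches_def by blast
  have "gmap (p, q, r) w - of_int_pair (p, q) = (if r then - w else w)"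
    by (simp add: gmap_def of_int_pair_def)
  moreover have "gmap (p, q, r) w \<in> symm T" "(if r then - w else w) \<in> symm T"
    using w by (simp_all add: symm_def)
  ultimately show ?thesis unfolding diff_set_def by (metis (mono_tags) mem_Collect_eq)
qed

lemma gfun_uminus: "gfun A B (- p) = (of_int B - 1, 0) - gfun A B p"
  by (cases p) (simp add: gfun_def Mmap_def field_simps)

lemma trans_succs_recurrence:
  assumes "u' \<in> trans_succs A B u" "u'' \<in> trans_succs A B u'"
  shows "\<bar>snd u'' + A * snd u' + B * snd u\<bar> \<le> B - 1"
  using assms unfolding trans_succs_def by (auto simp: algebra_simps)

lemma recurrence_forces_negative_extreme:
  fixes A B m y y' :: int
  assumes "1 \<le> A" "A \<le> B - 2" "2 \<le> m" "\<bar>y\<bar> \<le> m" "\<bar>y'\<bar> \<le> m" "\<bar>y' + A * y + B * m\<bar> \<le> B - 1"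
  shows "y = - m"
proof (rule ccontr)
  assume "y \<noteq> - m"
  then have "- (m - 1) \<le> y" using assms(4) by auto
  then have "A * (- (m - 1)) \<le> A * y" using assms(1) by (intro mult_left_mono) auto
  moreover have "1 * 1 \<le> (B - 1 - A) * (m - 1)" using assms by (intro mult_mono) auto
  ultimately show False using assms by (simp add: algebra_simps abs_le_iff)
qed

context tile_params
begin

text \<open>The term \<open>B y\<^sub>0 = B m\<close> dominates unless \<open>(A, B)\<close> is one of finitely many exceptions,
  which are checked by brute force.\<close>
lemma bounded_recurrence_absurd:
  fixes m y1 y2 y3 y4 :: int
  assumes "2 \<le> m" "\<bar>y1\<bar> \<le> m" "\<bar>y2\<bar> \<le> m" "\<bar>y3\<bar> \<le> m" "\<bar>y4\<bar> \<le> m"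
    and r0: "\<bar>y2 + A * y1 + B * m\<bar> \<le> B - 1"
    and r1: "\<bar>y3 + A * y2 + B * y1\<bar> \<le> B - 1"
    and r2: "\<bar>y4 + A * y3 + B * y2\<bar> \<le> B - 1"
  shows False
proof -
  consider "A = 0" | "A = -1" "4 \<le> B" | "1 \<le> A" "A \<le> B - 2"
    | "(A, B) \<in> {(-1, 2), (-1, 3), (1, 2), (2, 2), (2, 3), (3, 4)}"
  proof (cases "A = 0 \<or> (A = -1 \<and> 4 \<le> B) \<or> (1 \<le> A \<and> A \<le> B - 2)")
    case False
    then have "A = -1 \<and> (B = 2 \<or> B = 3) \<or> (A = B - 1 \<or> A = B) \<and> 1 \<le> A"
      using A_lower A_le_B B_ge_2 by auto
    then have "(A, B) \<in> {(-1, 2), (-1, 3), (1, 2), (2, 2), (2, 3), (3, 4)}" using A_upper B_ge_2 by auto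
    then show ?thesis using that by blast
  qed (use that in blast)
  then show False
  proof cases
    case 1
    have "1 * 1 \<le> (B - 1) * (m - 1)" using B_ge_2 assms(1) by (intro mult_mono) auto
    then have "B + m \<le> B * m" by (simp add: algebra_simps)
    moreover have "y2 + B * m \<le> B - 1" using abs_le_D1[OF r0] 1 by simp
    ultimately show False using abs_le_D2[OF assms(3)] by linarith
  next
    case 2
    have "2 * 1 \<le> (B - 2) * (m - 1)" using 2 assms(1) by (intro mult_mono) auto
    then have "B + 2 * m \<le> B * m" by (simp add: algebra_simps)
    moreover have "y2 - y1 + B * m \<le> B - 1" using abs_le_D1[OF r0] 2 by simp
    ultimately show False using abs_le_D1[OF assms(2)] abs_le_D2[OF assms(3)] by linarith
  next
    case 3
    have "y1 = - m" using recurrence_forces_negative_extreme[OF 3 assms(1-3) r0] .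
    moreover have "- y2 = - m"
      using recurrence_forces_negative_extreme[OF 3 assms(1), of "- y2" "- y3"] assms(3,4) r1 \<open>y1 = - m\<close>
      by (simp add: algebra_simps)
    ultimately have "m * (B - A + 1) \<le> B - 1" using abs_le_D1[OF r0] by (simp add: algebra_simps)
    moreover have "2 * (B - A + 1) \<le> m * (B - A + 1)" using assms(1) 3 by (intro mult_right_mono) auto
    ultimately have "2 * (B - A + 1) \<le> B - 1" by (rule order_trans[rotated])
    then show False using A_upper by arith
  next
    case 4
    then show False using assms by (auto simp: abs_le_iff)
  qed
qed

end

context tile
begin

lemma digit_image_shape:
  assumes "d \<in> Dset B" "y \<in> T"
  shows "\<exists>a\<in>symm T. \<exists>k\<in>{0..B - 1}. gmap d y = a + (of_int k, 0)"
    and "\<exists>a\<in>symm T. \<exists>k\<in>{0..B - 1}. (of_int B - 1, 0) - gmap d y = a + (of_int k, 0)"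
proof -
  have y: "y \<in> symm T" "- y \<in> symm T" using assms(2) by (auto simp: symm_def)
  from assms(1) B_ge_2 have "(\<exists>a\<in>symm T. \<exists>k\<in>{0..B - 1}. gmap d y = a + (of_int k, 0)) \<and>
      (\<exists>a\<in>symm T. \<exists>k\<in>{0..B - 1}. (of_int B - 1, 0) - gmap d y = a + (of_int k, 0))"
  proof (cases rule: Dset_cases)
    case 1
    have "gmap d y = - y + (of_int 0, 0)" "(of_int B - 1, 0) - gmap d y = y + (of_int (B - 1), 0)"
      using 1 by (simp_all add: gmap_def gc_def zero_prod_def)
    then show ?thesis using y B_ge_2 by fastforce
  next
    case (2 k)
    have "gmap d y = y + (of_int k, 0)" "(of_int B - 1, 0) - gmap d y = - y + (of_int (B - 1 - k), 0)"
      using 2 by (simp_all add: gmap_def add.commute)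
    then show ?thesis using y 2 by fastforce
  qed
  then show "\<exists>a\<in>symm T. \<exists>k\<in>{0..B - 1}. gmap d y = a + (of_int k, 0)"
    and "\<exists>a\<in>symm T. \<exists>k\<in>{0..B - 1}. (of_int B - 1, 0) - gmap d y = a + (of_int k, 0)"
    by blast+
qed

lemma gfun_symm_shape:
  assumes "p \<in> symm T"
  shows "\<exists>a\<in>symm T. \<exists>k\<in>{0..B - 1}. gfun A B p = a + (of_int k, 0)"
proof -
  consider "p \<in> T" | "- p \<in> T" using assms by (auto simp: symm_def)
  then show ?thesis
  proof cases
    case 1
    then show ?thesis using T_descend digit_image_shape(1) by metis
  next
    case 2
    then obtain d y where "d \<in> Dset B" "y \<in> T" "gfun A B (- p) = gmap d y" using T_descend by blast
    moreover have "gfun A B p = (of_int B - 1, 0) - gfun A B (- p)"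
      using gfun_uminus[of A B "- p"] by simp
    ultimately show ?thesis using digit_image_shape(2) by simp
  qed
qed

lemma diff_set_trans_closed:
  assumes "v \<in> diff_set T" shows "\<exists>u\<in>diff_set T. u \<in> trans_succs A B v"
proof -
  obtain p where p: "p \<in> symm T" "p - of_int_pair v \<in> symm T" using assms unfolding diff_set_def by blast
  obtain a k where a: "a \<in> symm T" "k \<in> {0..B - 1}" "gfun A B p = a + (of_int k, 0)"
    using gfun_symm_shape[OF p(1)] by blast
  obtain b k' where b: "b \<in> symm T" "k' \<in> {0..B - 1}" "gfun A B (p - of_int_pair v) = b + (of_int k', 0)"
    using gfun_symm_shape[OF p(2)] by blast
  define u where "u = (k' - k - B * snd v, fst v - A * snd v)"
  have "Mmap A B (of_int_pair v) = (a + (of_int k, 0)) - (b + (of_int k', 0))"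
    using gfun_diff[of A B p "p - of_int_pair v"] a(3) b(3) by simp
  then have "of_int_pair u = (a + (of_int k, 0)) - (b + (of_int k', 0)) + (of_int (k' - k), 0)"
    using Mmap_of_int_pair[of A B v "k' - k"] by (simp add: u_def)
  also have "\<dots> = a - b" by (simp add: algebra_simps)
  finally have "a - of_int_pair u = b" by simp
  then have "u \<in> diff_set T" using a(1) b(1) unfolding diff_set_def by auto
  moreover have "u \<in> trans_succs A B v" using a(2) b(2) unfolding trans_succs_def u_def by auto
  ultimately show ?thesis by blast
qed

lemma diff_set_snd_bound:
  assumes "v \<in> diff_set T" shows "\<bar>snd v\<bar> \<le> 1"
proof (rule ccontr)
  assume v: "\<not> \<bar>snd v\<bar> \<le> 1"
  let ?D = "diff_set T"
  obtain s where s: "\<And>u. u \<in> ?D \<Longrightarrow> s u \<in> ?D" "\<And>u. u \<in> ?D \<Longrightarrow> s u \<in> trans_succs A B u"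
    using diff_set_trans_closed by metis
  have recurrence: "\<bar>snd (s (s u)) + A * snd (s u) + B * snd u\<bar> \<le> B - 1" if "u \<in> ?D" for u
    using trans_succs_recurrence s that by blast
  have fin: "finite ?D" using finite_diff_set[OF compact_T] .
  define m where "m = Max ((\<lambda>u. \<bar>snd u\<bar>) ` ?D)"
  have le_m: "\<bar>snd u\<bar> \<le> m" if "u \<in> ?D" for u using fin that unfolding m_def by simp
  have "m \<in> (\<lambda>u. \<bar>snd u\<bar>) ` ?D" unfolding m_def using fin assms by (intro Max_in) auto
  then obtain w where w: "w \<in> ?D" "\<bar>snd w\<bar> = m" by blast
  have m2: "2 \<le> m" using le_m[OF assms] v by linarith
  have "snd w = m \<or> snd (- w) = m" using w(2) by (cases w) auto
  then obtain u0 where u0: "u0 \<in> ?D" "snd u0 = m" using w(1) uminus_in_diff_set by blast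
  define u1 u2 u3 u4 where "u1 = s u0" and "u2 = s u1" and "u3 = s u2" and "u4 = s u3"
  have u: "u1 \<in> ?D" "u2 \<in> ?D" "u3 \<in> ?D" "u4 \<in> ?D" using s(1) u0(1) by (simp_all add: u1_def u2_def u3_def u4_def)
  show False
  proof (rule bounded_recurrence_absurd[OF m2 le_m[OF u(1)] le_m[OF u(2)] le_m[OF u(3)] le_m[OF u(4)]])
    show "\<bar>snd u2 + A * snd u1 + B * m\<bar> \<le> B - 1" using recurrence[OF u0(1)] u0(2) by (simp add: u1_def u2_def)
    show "\<bar>snd u3 + A * snd u2 + B * snd u1\<bar> \<le> B - 1" using recurrence[OF u(1)] by (simp add: u2_def u3_def)
    show "\<bar>snd u4 + A * snd u3 + B * snd u2\<bar> \<le> B - 1" using recurrence[OF u(2)] by (simp add: u3_def u4_def)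
  qed
qed

end

section \<open>Candidates and counting\<close>

text \<open>\<open>fst v - A * snd v\<close> is the second coordinate of every element of \<open>trans_succs A B v\<close>.\<close>
definition admissible :: "int \<Rightarrow> int \<times> int \<Rightarrow> bool" where
  "admissible A v \<longleftrightarrow> \<bar>snd v\<bar> \<le> 1 \<and> \<bar>fst v - A * snd v\<bar> \<le> 1 \<and>
     (1 \<le> A \<longrightarrow> \<not> (snd v \<noteq> 0 \<and> fst v - A * snd v = snd v)) \<and>
     (A = -1 \<longrightarrow> \<not> (snd v \<noteq> 0 \<and> fst v - A * snd v = - snd v))"

text \<open>Together with \<open>0\<close>, the translation vectors of the neighbours of \<open>T\<^sup>\<ell>\<close>.\<close>
definition trans_cands :: "int \<Rightarrow> (int \<times> int) set" where
  "trans_cands A =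
    (if 1 \<le> A then {(0, 0), (1, 0), (-1, 0), (A, 1), (-A, -1), (A - 1, 1), (1 - A, -1)}
     else if A = 0 then {(0, 0), (1, 0), (-1, 0), (0, 1), (0, -1), (1, 1), (-1, -1), (1, -1), (-1, 1)}
     else {(0, 0), (1, 0), (-1, 0), (0, 1), (0, -1), (-1, 1), (1, -1)})"

definition excluded :: "int \<Rightarrow> gam set" where
  "excluded A =
    (if 0 < A then {(A, 1, False), (-A, -1, False), (-A, -1, True)}
     else if A = -1 then {(-1, 1, False), (0, 1, False), (1, -1, False), (0, -1, False), (1, -1, True),
                          (0, -1, True)}
     else if A = 0 then {(1, 1, False), (-1, -1, False), (1, -1, False), (-1, 1, False), (0, 1, False),
                         (0, -1, False), (-1, -1, True), (1, -1, True), (0, -1, True)}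
     else {})"

definition nbr_cands :: "int \<Rightarrow> gam set" where
  "nbr_cands A = {(p, q, r). (p, q) \<in> trans_cands A} - insert gid (excluded A)"

lemma finite_trans_cands: "finite (trans_cands A)"
  by (simp add: trans_cands_def)

context tile_params
begin

lemma trans_cands_closed:
  assumes "v \<in> trans_cands A" shows "\<exists>u\<in>trans_cands A. u \<in> trans_succs A B v"
proof -
  obtain x y where v: "v = (x, y)" by (cases v)
  consider "1 \<le> A" | "A = 0" | "A = -1" using A_lower by linarith
  then show ?thesis
  proof cases
    case 1
    then show ?thesis using assms A_le_B unfolding v trans_cands_def
      by (simp, elim disjE) (auto simp: mem_trans_succs_iff)
  next
    case 2
    then show ?thesis using assms B_ge_2 unfolding v trans_cands_def
      by (simp, elim disjE) (auto simp: mem_trans_succs_iff)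
  next
    case 3
    then show ?thesis using assms B_ge_2 unfolding v trans_cands_def
      by (simp, elim disjE) (auto simp: mem_trans_succs_iff)
  qed
qed

lemma admissible_in_trans_cands:
  assumes "admissible A v" shows "v \<in> trans_cands A"
proof -
  obtain x y where v: "v = (x, y)" by (cases v)
  define t where "t = x - A * y"
  have x: "x = t + A * y" by (simp add: t_def)
  have y: "y = -1 \<or> y = 0 \<or> y = 1" and t: "t = -1 \<or> t = 0 \<or> t = 1"
    using assms unfolding v admissible_def t_def by auto
  have excl: "1 \<le> A \<Longrightarrow> \<not> (y \<noteq> 0 \<and> t = y)" "A = -1 \<Longrightarrow> \<not> (y \<noteq> 0 \<and> t = - y)"
    using assms unfolding v admissible_def t_def by auto
  consider "1 \<le> A" | "A = 0" | "A = -1" using A_lower by linarith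
  then show ?thesis
  proof cases
    case 1
    from y t show ?thesis using 1 excl(1)[OF 1] unfolding v x trans_cands_def
      by (elim disjE) (simp_all add: algebra_simps)
  next
    case 2
    from y t show ?thesis using 2 unfolding v x trans_cands_def by (elim disjE) simp_all
  next
    case 3
    from y t show ?thesis using 3 excl(2)[OF 3] unfolding v x trans_cands_def
      by (elim disjE) (simp_all add: algebra_simps)
  qed
qed

lemma closed_six_set:
  obtains X where "card X = 6" "gid \<notin> X"
    "\<And>h. h \<in> insert gid X \<Longrightarrow> \<exists>h'\<in>insert gid X. h' \<in> nbr_succs A B h"
proof -
  consider "3 \<le> A" | "A = 2" "3 \<le> B" | "A = 2" "B = 2" | "A = 1" | "A = 0" | "A = -1" "3 \<le> B"
    | "A = -1" "B = 2"
    using A_lower A_le_B B_ge_2 by linarith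
  then show thesis
  proof cases
    case 1
    show thesis
      by (rule that[of "{(0, 0, True), (1, 0, True), (A, 1, True), (A - 1, 1, True), (1 - A, -1, True),
          (1, 0, False)}"]) (use 1 A_upper B_ge_2 in \<open>auto simp: gid_def mem_nbr_succs_iff\<close>)
  next
    case 2
    show thesis
      by (rule that[of "{(0, 0, True), (1, 0, True), (2, 1, True), (1, 1, True), (1, 0, False), (1, 1, False)}"])
        (use 2 A_upper in \<open>auto simp: gid_def mem_nbr_succs_iff\<close>)
  next
    case 3
    show thesis
      by (rule that[of "{(0, 0, True), (1, 0, True), (1, 1, True), (2, 1, True), (1, 1, False), (-1, -1, False)}"])
        (use 3 in \<open>auto simp: gid_def mem_nbr_succs_iff\<close>)
  next
    case 4
    show thesis
      by (rule that[of "{(0, 0, True), (1, 0, True), (1, 1, True), (0, 1, True), (1, 0, False), (-1, 0, False)}"])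
        (use 4 B_ge_2 in \<open>auto simp: gid_def mem_nbr_succs_iff\<close>)
  next
    case 5
    show thesis
      by (rule that[of "{(0, 0, True), (1, 0, True), (1, 1, True), (-1, 1, True), (0, 1, True), (1, 0, False)}"])
        (use 5 B_ge_2 in \<open>auto simp: gid_def mem_nbr_succs_iff\<close>)
  next
    case 6
    show thesis
      by (rule that[of "{(0, 0, True), (1, 0, False), (-1, 0, False), (0, 1, True), (-1, 1, True), (1, 0, True)}"])
        (use 6 in \<open>auto simp: gid_def mem_nbr_succs_iff\<close>)
  next
    case 7
    show thesis
      by (rule that[of "{(0, 0, True), (1, 0, False), (-1, 0, False), (0, 1, True), (-1, 1, True), (-1, 0, True)}"])
        (use 7 in \<open>auto simp: gid_def mem_nbr_succs_iff\<close>)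
  qed
qed

lemma nbr_cands_subsetI:
  "(\<And>p q r. (p, q) \<in> trans_cands A \<Longrightarrow> (p, q, r) \<notin> insert gid (excluded A) \<Longrightarrow> (p, q, r) \<in> S)
    \<Longrightarrow> nbr_cands A \<subseteq> S"
  by (auto simp: nbr_cands_def)

lemma nbr_cands_listed:
  obtains L :: "gam list" where "nbr_cands A \<subseteq> set L" "length L \<le> 10"
proof -
  consider "1 \<le> A" | "A = 0" | "A = -1" using A_lower by linarith
  then show thesis
  proof cases
    case 1
    have tc1: "trans_cands A = {(0, 0), (1, 0), (-1, 0), (A, 1), (-A, -1), (A - 1, 1), (1 - A, -1)}"
      and ex1: "excluded A = {(A, 1, False), (-A, -1, False), (-A, -1, True)}"
      using 1 by (simp_all add: trans_cands_def excluded_def)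
    show thesis
    proof (rule that, rule nbr_cands_subsetI)
      fix p q r assume "(p, q) \<in> trans_cands A" "(p, q, r) \<notin> insert gid (excluded A)"
      then show "(p, q, r) \<in> set [(1, 0, False), (-1, 0, False), (A - 1, 1, False), (1 - A, -1, False),
            (0, 0, True), (1, 0, True), (-1, 0, True), (A, 1, True), (A - 1, 1, True), (1 - A, -1, True)]"
        using 1 unfolding tc1 ex1 gid_def by (cases r) auto
    qed simp
  next
    case 2
    have tc2: "trans_cands A = {(0, 0), (1, 0), (-1, 0), (0, 1), (0, -1), (1, 1), (-1, -1), (1, -1), (-1, 1)}"
      and ex2: "excluded A = {(1, 1, False), (-1, -1, False), (1, -1, False), (-1, 1, False), (0, 1, False),
                       (0, -1, False), (-1, -1, True), (1, -1, True), (0, -1, True)}"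
      using 2 by (simp_all add: trans_cands_def excluded_def)
    show thesis
    proof (rule that, rule nbr_cands_subsetI)
      fix p q r assume "(p, q) \<in> trans_cands A" "(p, q, r) \<notin> insert gid (excluded A)"
      then show "(p, q, r) \<in> set [(1, 0, False), (-1, 0, False), (0, 0, True), (1, 0, True), (-1, 0, True),
            (1, 1, True), (-1, 1, True), (0, 1, True)]"
        using 2 unfolding tc2 ex2 gid_def by (cases r) auto
    qed simp
  next
    case 3
    have tc3: "trans_cands A = {(0, 0), (1, 0), (-1, 0), (0, 1), (0, -1), (-1, 1), (1, -1)}"
      and ex3: "excluded A = {(-1, 1, False), (0, 1, False), (1, -1, False), (0, -1, False), (1, -1, True),
                        (0, -1, True)}"
      using 3 by (simp_all add: trans_cands_def excluded_def)
    show thesis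
    proof (rule that, rule nbr_cands_subsetI)
      fix p q r assume "(p, q) \<in> trans_cands A" "(p, q, r) \<notin> insert gid (excluded A)"
      then show "(p, q, r) \<in> set [(1, 0, False), (-1, 0, False), (0, 0, True), (1, 0, True), (-1, 0, True),
            (0, 1, True), (-1, 1, True)]"
        using 3 unfolding tc3 ex3 gid_def by (cases r) auto
    qed simp
  qed
qed

lemma nbr_cands_card: "finite (nbr_cands A)" "card (nbr_cands A) \<le> 10"
proof -
  obtain L where L: "nbr_cands A \<subseteq> set L" "length L \<le> 10" by (rule nbr_cands_listed)
  show "finite (nbr_cands A)" using L(1) finite_subset by blast
  have "card (nbr_cands A) \<le> card (set L)" using card_mono[OF _ L(1)] by simp
  also have "\<dots> \<le> length L" by (rule card_length)
  finally show "card (nbr_cands A) \<le> 10" using L(2) by simp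
qed

end

context tile
begin

lemma diff_set_admissible:
  assumes "v \<in> diff_set T" shows "admissible A v"
proof -
  have succ_bound: "\<bar>fst u - A * snd u\<bar> \<le> 1" if u: "u \<in> diff_set T" for u
  proof -
    obtain u' where "u' \<in> diff_set T" "u' \<in> trans_succs A B u" using diff_set_trans_closed[OF u] by blast
    then show ?thesis using diff_set_snd_bound unfolding trans_succs_def by auto
  qed
  have forbidden_step: "\<not> (snd u = 1 \<and> fst u - A = e)"
    if u: "u \<in> diff_set T" and e: "e = 1 \<and> 1 \<le> A \<or> e = -1 \<and> A = -1" for u e
  proof
    assume h: "snd u = 1 \<and> fst u - A = e"
    obtain u' where u': "u' \<in> diff_set T" "u' \<in> trans_succs A B u" using diff_set_trans_closed[OF u] by blast
    then obtain j where "\<bar>j\<bar> \<le> B - 1" "u' = (j - B, e)" using h unfolding trans_succs_def by auto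
    then show False using succ_bound[OF u'(1)] e by (auto simp: abs_le_iff)
  qed
  obtain x y where v: "v = (x, y)" by (cases v)
  have minus: "(- x, - y) \<in> diff_set T" using uminus_in_diff_set[OF assms] v by simp
  have "y = -1 \<or> y = 0 \<or> y = 1" using diff_set_snd_bound[OF assms] v by auto
  then show ?thesis
    using succ_bound[OF assms] forbidden_step[OF assms, of 1] forbidden_step[OF assms, of "-1"]
      forbidden_step[OF minus, of 1] forbidden_step[OF minus, of "-1"]
    unfolding v admissible_def by (elim disjE) (auto simp: algebra_simps)
qed

lemma touches_admissible: "touches T (p, q, r) \<Longrightarrow> admissible A (p, q)"
  using diff_set_admissible touches_imp_in_diff_set by blast

lemma excluded_not_touches:
  assumes "g \<in> excluded A" shows "\<not> touches T g"
proof
  assume "touches T g"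
  then obtain p q s where succ: "(p, q, s) \<in> nbr_succs A B g" "admissible A (p, q)"
    using touches_succ touches_admissible by (metis prod_cases3)
  note facts = assms succ A_le_B B_ge_2
  consider "0 < A" | "A = -1" | "A = 0" using A_lower by linarith
  then show False
  proof cases
    case 1
    with facts show False by (auto simp: excluded_def mem_nbr_succs_iff admissible_def abs_le_iff)
  next
    case 2
    with facts show False by (auto simp: excluded_def mem_nbr_succs_iff admissible_def abs_le_iff)
  next
    case 3
    with facts show False by (auto simp: excluded_def mem_nbr_succs_iff admissible_def abs_le_iff)
  qed
qed

lemma nbr_subset_nbr_cands: "nbr T \<subseteq> nbr_cands A"
  using nbr_iff touches_admissible admissible_in_trans_cands excluded_not_touches
  by (fastforce simp: nbr_cands_def)

lemma six_le_card_nbr: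
  assumes "finite (nbr T)" shows "6 \<le> card (nbr T)"
proof -
  obtain X where X: "card X = 6" "gid \<notin> X"
    and closed: "\<And>h. h \<in> insert gid X \<Longrightarrow> \<exists>h'\<in>insert gid X. h' \<in> nbr_succs A B h"
    using closed_six_set by metis
  have "finite X" using X(1) by (metis card.infinite zero_neq_numeral)
  have "X \<subseteq> nbr T"
  proof
    fix h assume h: "h \<in> X"
    have "touches T h"
      by (rule touches_if_succ_closed[of "insert gid X"]) (use \<open>finite X\<close> closed h in auto)
    moreover have "h \<noteq> gid" using h X(2) by blast
    ultimately show "h \<in> nbr T" by (simp add: nbr_iff)
  qed
  from card_mono[OF assms this] show ?thesis using X(1) by simp
qed

end

locale tile_pair = tile A B T + lattice_tile A B Tl for A B T Tl
begin

lemma nbr_subset_Sprime: "nbr T \<subseteq> Sprime Tl"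
proof
  fix g assume g: "g \<in> nbr T"
  obtain p q r where pqr: "g = (p, q, r)" by (cases g)
  have cand: "(p, q) \<in> trans_cands A" and "g \<noteq> gid"
    using g pqr nbr_subset_nbr_cands by (auto simp: nbr_cands_def)
  show "g \<in> Sprime Tl"
  proof (cases "(p, q) = (0, 0)")
    case True
    then have "g = gc" using \<open>g \<noteq> gid\<close> pqr by (auto simp: gid_def gc_def)
    then show ?thesis unfolding Sprime_def by simp
  next
    case False
    obtain w where "w \<in> Tl" "w + of_int_pair (p, q) \<in> Tl"
      using translate_touches_if_closed[OF finite_trans_cands trans_cands_closed cand] by blast
    moreover have "gmap (p, q, False) w = w + of_int_pair (p, q)" by (simp add: gmap_def of_int_pair_def)
    ultimately have "touches Tl (p, q, False)" unfolding touches_def by (metis IntI empty_iff image_eqI)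
    then have "(p, q, False) \<in> nbr_l Tl"
      using False unfolding nbr_l_def gid_def touches_def by blast
    then show ?thesis using pqr unfolding Sprime_def comp_c_def by (cases r) force+
  qed
qed

end

theorem lemma3p6:
  fixes A B :: int and T Tl :: "(real \<times> real) set"
  assumes "-1 \<le> A" "A \<le> B" "B \<ge> 2" "2 * A < B + 3"
    and "is_T A B T" and "is_Tl A B Tl"
  shows "(A > 0 \<longrightarrow> nbr T \<subseteq> Sprime Tl - {(A, 1, False), (-A, -1, False), (-A, -1, True)})
       \<and> (A = -1 \<longrightarrow> nbr T \<subseteq> Sprime Tl - {(-1, 1, False), (0, 1, False), (1, -1, False),
                                        (0, -1, False), (1, -1, True), (0, -1, True)})
       \<and> (A = 0 \<longrightarrow> nbr T \<subseteq> Sprime Tl - {(1, 1, False), (-1, -1, False), (1, -1, False),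
                                       (-1, 1, False), (0, 1, False), (0, -1, False),
                                       (-1, -1, True), (1, -1, True), (0, -1, True)})
       \<and> finite (nbr T) \<and> 6 \<le> card (nbr T) \<and> card (nbr T) \<le> 10"
proof -
  interpret tile_pair A B T Tl
    using assms by unfold_locales
  have "nbr T \<subseteq> Sprime Tl - excluded A"
    using nbr_subset_Sprime nbr_subset_nbr_cands by (auto simp: nbr_cands_def)
  moreover have "finite (nbr T)" and "card (nbr T) \<le> 10"
    using nbr_cands_card nbr_subset_nbr_cands card_mono[of "nbr_cands A" "nbr T"] finite_subset
    by fastforce+
  moreover note six_le_card_nbr[OF \<open>finite (nbr T)\<close>]
  ultimately show ?thesis by (intro conjI impI) (simp_all add: excluded_def)
qed

end
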